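(* Let $\pi$ be a rectangular permutation. Then each of $\psi_1(\pi)$, $\psi_2(\pi)$, $\psi_u(\pi)$, $\psi_d(\pi)$ that is defined (i.e. for which $\pi$ lies in the operator's domain) is again rectangular.
   Context: A permutation is rectangular if it avoids the patterns $2413,2431,4213,4231$. For $\pi\in S_n$ (one-line form $[\pi_1\cdots\pi_n]$) and $1\le i,j\le n+1$, $\rho_{i,j}(\pi)\in S_{n+1}$ is obtained by increasing by $1$ every entry $\ge i$ and inserting the value $i$ at position $j$. Operators: $\psi_1=\rho_{1,1}$, defined on all rectangular permutations (including the empty permutation $e_0$); $\psi_2=\rho_{1,2}$, defined on rectangular $\pi$ of size $\ge1$ with $\pi_1\neq1$; $\psi_u(\pi)=\rho_{\pi_1,1}(\pi)$, defined on rectangular $\pi$ of size $\ge1$ with $\pi_1\ne1$; $\psi_d(\pi)=\rho_{\pi_1+1,1}(\pi)$, defined on rectangular $\pi$ of size $\ge1$. *)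

theory Defs
  imports Main
begin

definition is_perm :: "nat list \<Rightarrow> bool" where
  "is_perm xs \<longleftrightarrow> distinct xs \<and> set xs = {1..length xs}"

definition contains :: "nat list \<Rightarrow> nat list \<Rightarrow> bool" where
  "contains xs p \<longleftrightarrow> (\<exists>idx :: nat \<Rightarrow> nat.
      strict_mono_on {..<length p} idx \<and>
      (\<forall>a<length p. idx a < length xs) \<and>
      (\<forall>a<length p. \<forall>b<length p.
          (xs ! idx a < xs ! idx b) \<longleftrightarrow> (p ! a < p ! b)))"

definition avoids :: "nat list \<Rightarrow> nat list \<Rightarrow> bool" where
  "avoids xs p \<longleftrightarrow> \<not> contains xs p"

definition rectangular :: "nat list \<Rightarrow> bool" where
  "rectangular xs \<longleftrightarrow> is_perm xs \<and>
     avoids xs [2,4,1,3] \<and> avoids xs [2,4,3,1] \<and>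
     avoids xs [4,2,1,3] \<and> avoids xs [4,2,3,1]"

definition rho :: "nat \<Rightarrow> nat \<Rightarrow> nat list \<Rightarrow> nat list" where
  "rho i j xs = (let ys = map (\<lambda>x. if i \<le> x then x + 1 else x) xs
                 in take (j - 1) ys @ [i] @ drop (j - 1) ys)"

definition psi1 :: "nat list \<Rightarrow> nat list" where "psi1 xs = rho 1 1 xs"
definition psi2 :: "nat list \<Rightarrow> nat list" where "psi2 xs = rho 1 2 xs"
definition psiu :: "nat list \<Rightarrow> nat list" where "psiu xs = rho (hd xs) 1 xs"
definition psid :: "nat list \<Rightarrow> nat list" where "psid xs = rho (hd xs + 1) 1 xs"

end

theory Submission
  imports Defs "HOL-Library.Sublist"
begin

text \<open>The four forbidden patterns are exactly the quadruples whose last two values straddle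
  the smaller of the first two and stay below the larger one; in particular the least value
  of an occurrence is one of its last two entries. Hence a new minimum placed at position 1
  or 2 (\<open>psi1\<close>, \<open>psi2\<close>) lies in no occurrence. The operators \<open>psiu\<close> and \<open>psid\<close>
  prepend a value adjacent to the (shifted) first entry: an occurrence containing both
  adjacent values would need a value strictly between them, and in an occurrence containing
  only the new value that value may be replaced by its neighbour. All other entries are
  order-isomorphic to \<open>\<pi>\<close>, which avoids the patterns.\<close>

lemma subseq_imp_strict_mono_indices:
  assumes "subseq ys xs"
  shows "\<exists>idx. strict_mono_on {..<length ys} idx \<and>
    (\<forall>k<length ys. idx k < length xs \<and> ys ! k = xs ! idx k)"
  using assms
proof induction
  case (list_emb_Nil xs)
  then show ?case by (auto simp: strict_mono_on_def)
next
  case (list_emb_Cons ys xs x)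
  then obtain idx where "strict_mono_on {..<length ys} idx"
    "\<forall>k<length ys. idx k < length xs \<and> ys ! k = xs ! idx k"
    by blast
  then show ?case
    by (intro exI[of _ "Suc \<circ> idx"]) (auto simp: strict_mono_on_def)
next
  case (list_emb_Cons2 y x ys xs)
  then obtain idx where "strict_mono_on {..<length ys} idx"
    "\<forall>k<length ys. idx k < length xs \<and> ys ! k = xs ! idx k"
    by blast
  then show ?case
    by (intro exI[of _ "\<lambda>k. if k = 0 then 0 else Suc (idx (k - 1))"])
      (use list_emb_Cons2 in \<open>auto simp: strict_mono_on_def nth_Cons' less_Suc_eq_0_disj\<close>)
qed

lemma strict_mono_indices_imp_subseq:
  assumes "strict_mono_on {..<length ys} idx"
    and "\<forall>k<length ys. idx k < length xs \<and> ys ! k = xs ! idx k"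
  shows "subseq ys xs"
  using assms
proof (induction xs arbitrary: ys idx)
  case Nil
  then show ?case by (cases ys) auto
next
  case (Cons x xs)
  note mono = Cons.prems(1) and idx = Cons.prems(2)
  show ?case
  proof (cases ys)
    case Nil
    then show ?thesis by simp
  next
    case ys: (Cons y ys')
    have first_least: "idx 0 < idx k" if "0 < k" "k < length ys" for k
      using mono that by (auto intro: strict_mono_onD)
    show ?thesis
    proof (cases "idx 0 = 0")
      case True
      have "idx (Suc k) - 1 < length xs \<and> ys' ! k = xs ! (idx (Suc k) - 1)"
        if "k < length ys'" for k
        using idx[rule_format, of "Suc k"] first_least[of "Suc k"] that ys
        by (auto simp: nth_Cons')
      moreover have "strict_mono_on {..<length ys'} (\<lambda>k. idx (Suc k) - 1)"
      proof (rule strict_mono_onI)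
        fix r s assume "r \<in> {..<length ys'}" "s \<in> {..<length ys'}" "r < s"
        then have "idx (Suc r) < idx (Suc s)" "idx 0 < idx (Suc r)"
          using mono first_least ys by (auto simp: strict_mono_on_def)
        then show "idx (Suc r) - 1 < idx (Suc s) - 1" by linarith
      qed
      ultimately have "subseq ys' xs" using Cons.IH by blast
      with True idx ys show ?thesis by auto
    next
      case False
      have "idx k - 1 < length xs \<and> ys ! k = xs ! (idx k - 1)" if "k < length ys" for k
        using idx[rule_format, of k] first_least[of k] False that
        by (cases k) (auto simp: nth_Cons')
      moreover have "strict_mono_on {..<length ys} (\<lambda>k. idx k - 1)"
      proof (rule strict_mono_onI)
        fix r s assume "r \<in> {..<length ys}" "s \<in> {..<length ys}" "r < s"
        then have "idx r < idx s" "idx 0 \<le> idx r"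
          using mono first_least[of r] by (auto simp: strict_mono_on_def le_less)
        then show "idx r - 1 < idx s - 1" using False by linarith
      qed
      ultimately have "subseq ys xs" using Cons.IH by blast
      then show ?thesis by auto
    qed
  qed
qed

lemma subseq_iff_strict_mono_indices:
  "subseq ys xs \<longleftrightarrow> (\<exists>idx. strict_mono_on {..<length ys} idx \<and>
     (\<forall>k<length ys. idx k < length xs \<and> ys ! k = xs ! idx k))"
  using subseq_imp_strict_mono_indices strict_mono_indices_imp_subseq by blast

definition same_order :: "'a::ord list \<Rightarrow> 'b::ord list \<Rightarrow> bool" where
  "same_order xs ys \<longleftrightarrow> length xs = length ys \<and>
     (\<forall>a<length xs. \<forall>b<length xs. xs ! a < xs ! b \<longleftrightarrow> ys ! a < ys ! b)"

lemma contains_iff_subseq: "contains xs p \<longleftrightarrow> (\<exists>ys. subseq ys xs \<and> same_order ys p)"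
proof
  assume "contains xs p"
  then obtain idx where "strict_mono_on {..<length p} idx" "\<forall>a<length p. idx a < length xs"
    "\<forall>a<length p. \<forall>b<length p. xs ! idx a < xs ! idx b \<longleftrightarrow> p ! a < p ! b"
    unfolding contains_def by blast
  then show "\<exists>ys. subseq ys xs \<and> same_order ys p"
    by (intro exI[of _ "map (\<lambda>k. xs ! idx k) [0..<length p]"])
      (auto simp: subseq_iff_strict_mono_indices same_order_def)
next
  assume "\<exists>ys. subseq ys xs \<and> same_order ys p"
  then show "contains xs p"
    unfolding contains_def subseq_iff_strict_mono_indices same_order_def by metis
qed

text \<open>The values \<open>w x y z\<close> form one of the patterns 2413, 2431, 4213, 4231.\<close>

definition rect_pattern :: "'a::linorder \<Rightarrow> 'a \<Rightarrow> 'a \<Rightarrow> 'a \<Rightarrow> bool" where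
  "rect_pattern w x y z \<longleftrightarrow> min y z < min w x \<and> min w x < max y z \<and> max y z < max w x"

definition has_rect_pattern :: "'a::linorder list \<Rightarrow> bool" where
  "has_rect_pattern xs \<longleftrightarrow> (\<exists>w x y z. subseq [w, x, y, z] xs \<and> rect_pattern w x y z)"

lemma rect_pattern_iff:
  "rect_pattern w x y z \<longleftrightarrow>
    (y < w \<and> w < z \<and> z < x) \<or> (z < w \<and> w < y \<and> y < x) \<or>
    (y < x \<and> x < z \<and> z < w) \<or> (z < x \<and> x < y \<and> y < w)"
  by (auto simp: rect_pattern_def min_def max_def)

lemma rect_pattern_iff_same_order:
  fixes w x y z :: "'a::linorder"
  shows "rect_pattern w x y z \<longleftrightarrow>
    same_order [w, x, y, z] [2, 4, 1, 3::nat] \<or> same_order [w, x, y, z] [2, 4, 3, 1::nat] \<or>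
    same_order [w, x, y, z] [4, 2, 1, 3::nat] \<or> same_order [w, x, y, z] [4, 2, 3, 1::nat]"
proof -
  have
    "same_order [w, x, y, z] [2, 4, 1, 3::nat] \<longleftrightarrow> y < w \<and> w < z \<and> z < x"
    "same_order [w, x, y, z] [2, 4, 3, 1::nat] \<longleftrightarrow> z < w \<and> w < y \<and> y < x"
    "same_order [w, x, y, z] [4, 2, 1, 3::nat] \<longleftrightarrow> y < x \<and> x < z \<and> z < w"
    "same_order [w, x, y, z] [4, 2, 3, 1::nat] \<longleftrightarrow> z < x \<and> x < y \<and> y < w"
    by (auto simp: same_order_def All_less_Suc numeral_eq_Suc)
  then show ?thesis by (simp add: rect_pattern_iff)
qed

lemma contains_length4_iff:
  "contains xs [p0, p1, p2, p3] \<longleftrightarrow>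
    (\<exists>w x y z. subseq [w, x, y, z] xs \<and> same_order [w, x, y, z] [p0, p1, p2, p3])"
  unfolding contains_iff_subseq
proof
  assume "\<exists>ys. subseq ys xs \<and> same_order ys [p0, p1, p2, p3]"
  then obtain ys where ys: "subseq ys xs" "same_order ys [p0, p1, p2, p3]" by blast
  then have "length ys = 4" by (simp add: same_order_def)
  then obtain w x y z where "ys = [w, x, y, z]" by (auto simp: numeral_eq_Suc length_Suc_conv)
  with ys show "\<exists>w x y z. subseq [w, x, y, z] xs \<and> same_order [w, x, y, z] [p0, p1, p2, p3]"
    by blast
qed blast

lemma rectangular_iff: "rectangular xs \<longleftrightarrow> is_perm xs \<and> \<not> has_rect_pattern xs"
  unfolding rectangular_def avoids_def contains_length4_iff has_rect_pattern_def
    rect_pattern_iff_same_order by blast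

lemma set_subseq_subset: "subseq xs ys \<Longrightarrow> set xs \<subseteq> set ys"
  by (induction rule: list_emb.induct) auto

lemma has_rect_pattern_ConsI: "has_rect_pattern ys \<Longrightarrow> has_rect_pattern (v # ys)"
  unfolding has_rect_pattern_def by blast

lemma rect_pattern_strict_mono_on:
  assumes "strict_mono_on S f" "w \<in> S" "x \<in> S" "y \<in> S" "z \<in> S"
  shows "rect_pattern (f w) (f x) (f y) (f z) \<longleftrightarrow> rect_pattern w x y z"
  using assms by (simp add: rect_pattern_iff strict_mono_on_less)

lemma has_rect_pattern_map_strict_mono_onD:
  assumes mono: "strict_mono_on (set xs) f" and pat: "has_rect_pattern (map f xs)"
  shows "has_rect_pattern xs"
proof -
  obtain w x y z where sub: "subseq [w, x, y, z] (map f xs)" and rect: "rect_pattern w x y z"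
    using pat unfolding has_rect_pattern_def by blast
  from sub obtain N where N: "[w, x, y, z] = map f (nths xs N)"
    by (metis subseq_conv_nths nths_map)
  have "length (nths xs N) = length [w, x, y, z]" unfolding N by simp
  then obtain a b c d where abcd: "nths xs N = [a, b, c, d]"
    by (auto simp: numeral_eq_Suc length_Suc_conv)
  with N have "w = f a" "x = f b" "y = f c" "z = f d" by simp_all
  moreover have sub': "subseq [a, b, c, d] xs" using abcd subseq_conv_nths by metis
  then have "{a, b, c, d} \<subseteq> set xs" using set_subseq_subset by fastforce
  ultimately have "rect_pattern a b c d"
    using rect rect_pattern_strict_mono_on[OF mono, of a b c d] by simp
  with sub' show ?thesis unfolding has_rect_pattern_def by blast
qed

lemma has_rect_pattern_Cons_minD:
  assumes min: "\<forall>y\<in>set ys. v < y" and pat: "has_rect_pattern (v # ys)"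
  shows "has_rect_pattern ys"
proof -
  obtain w x y z where sub: "subseq [w, x, y, z] (v # ys)" and rect: "rect_pattern w x y z"
    using pat unfolding has_rect_pattern_def by blast
  show ?thesis
  proof (cases "w = v")
    case True
    with sub have "{y, z} \<subseteq> set ys" using set_subseq_subset by fastforce
    with min have "v < y" "v < z" by auto
    with True rect show ?thesis by (auto simp: rect_pattern_def min_less_iff_disj)
  next
    case False
    with sub have "subseq [w, x, y, z] ys" by simp
    with rect show ?thesis unfolding has_rect_pattern_def by blast
  qed
qed

lemma has_rect_pattern_second_minD:
  assumes min: "\<forall>y\<in>set ys. v < y" and pat: "has_rect_pattern (u # v # ys)"
  shows "has_rect_pattern (u # ys)"
proof -
  obtain w x y z where sub: "subseq [w, x, y, z] (u # v # ys)" and rect: "rect_pattern w x y z"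
    using pat unfolding has_rect_pattern_def by blast
  consider "w \<noteq> u" | "w = u" "x = v" | "w = u" "x \<noteq> v" by blast
  then show ?thesis
  proof cases
    case 1
    with sub have "subseq [w, x, y, z] (v # ys)" by simp
    with rect have "has_rect_pattern (v # ys)" unfolding has_rect_pattern_def by blast
    then show ?thesis using has_rect_pattern_ConsI has_rect_pattern_Cons_minD min by blast
  next
    case 2
    with sub have "{y, z} \<subseteq> set ys" using set_subseq_subset by fastforce
    with min have "v < y" "v < z" by auto
    with 2 rect show ?thesis by (auto simp: rect_pattern_def min_less_iff_disj)
  next
    case 3
    with sub have "subseq [w, x, y, z] (u # ys)" by simp
    with rect show ?thesis unfolding has_rect_pattern_def by blast
  qed
qed

lemma has_rect_pattern_Cons_adjacentD:
  fixes v w :: nat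
  assumes dist: "distinct (v # w # ys)" and adj: "v = w + 1 \<or> w = v + 1"
    and pat: "has_rect_pattern (v # w # ys)"
  shows "has_rect_pattern (w # ys)"
proof -
  obtain a b c d where sub: "subseq [a, b, c, d] (v # w # ys)" and rect: "rect_pattern a b c d"
    using pat unfolding has_rect_pattern_def by blast
  consider "a \<noteq> v" | "a = v" "b = w" | "a = v" "b \<noteq> w" by blast
  then show ?thesis
  proof cases
    case 1
    with sub have "subseq [a, b, c, d] (w # ys)" by simp
    with rect show ?thesis unfolding has_rect_pattern_def by blast
  next
    case 2
    with rect adj show ?thesis by (auto simp: rect_pattern_def)
  next
    case 3
    with sub have sub': "subseq [b, c, d] ys" by auto
    then have "{b, c, d} \<subseteq> set ys" using set_subseq_subset by fastforce
    moreover have "(t < v \<longleftrightarrow> t < w) \<and> (v < t \<longleftrightarrow> w < t)" if "t \<in> set ys" for t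
    proof -
      have "t \<noteq> v" "t \<noteq> w" using that dist by auto
      with adj show ?thesis by arith
    qed
    ultimately have "rect_pattern v b c d \<longleftrightarrow> rect_pattern w b c d"
      by (simp add: rect_pattern_iff)
    with rect 3 have "rect_pattern w b c d" by simp
    with sub' show ?thesis unfolding has_rect_pattern_def by auto
  qed
qed

definition bump :: "nat \<Rightarrow> nat \<Rightarrow> nat" where
  "bump i x = (if i \<le> x then x + 1 else x)"

lemma strict_mono_on_bump: "strict_mono_on A (bump i)"
  by (auto simp: strict_mono_on_def bump_def)

lemma rho_conv:
  "rho i j xs = take (j - 1) (map (bump i) xs) @ i # drop (j - 1) (map (bump i) xs)"
  by (simp add: rho_def bump_def [abs_def] Let_def)

lemma set_map_bump:
  assumes "set xs = {1..n}" "1 \<le> i" "i \<le> n + 1"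
  shows "set (map (bump i) xs) = {1..n + 1} - {i}"
proof -
  have "bump i ` {1..n} = {1..n + 1} - {i}"
  proof
    show "{1..n + 1} - {i} \<subseteq> bump i ` {1..n}"
    proof
      fix y assume y: "y \<in> {1..n + 1} - {i}"
      show "y \<in> bump i ` {1..n}"
      proof (cases "y < i")
        case True
        with y assms show ?thesis by (force simp: bump_def)
      next
        case False
        with y assms have "y = bump i (y - 1)" "y - 1 \<in> {1..n}" by (auto simp: bump_def)
        then show ?thesis by blast
      qed
    qed
  qed (use assms in \<open>auto simp: bump_def\<close>)
  with assms(1) show ?thesis by simp
qed

lemma distinct_take_Cons_drop:
  assumes "distinct (x # ys)"
  shows "distinct (take k ys @ x # drop k ys)"
proof -
  have "x \<notin> set (take k ys)" "x \<notin> set (drop k ys)"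
    using assms by (auto dest: in_set_takeD in_set_dropD)
  moreover have "set (take k ys) \<inter> set (drop k ys) = {}"
    using assms by (simp add: set_take_disj_set_drop_if_distinct)
  ultimately show ?thesis using assms by simp
qed

lemma set_take_Cons_drop: "set (take k ys @ x # drop k ys) = insert x (set ys)"
proof -
  have "set (take k ys) \<union> set (drop k ys) = set ys" by (metis append_take_drop_id set_append)
  then show ?thesis by auto
qed

lemma is_perm_rho:
  assumes perm: "is_perm xs" and i: "1 \<le> i" "i \<le> length xs + 1"
  shows "is_perm (rho i j xs)"
proof -
  define ys where "ys = map (bump i) xs"
  have set_ys: "set ys = {1..length xs + 1} - {i}"
    using perm i set_map_bump unfolding ys_def is_perm_def by blast
  have "distinct ys"
    using perm strict_mono_on_imp_inj_on[OF strict_mono_on_bump] unfolding ys_def is_perm_def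
    by (simp add: distinct_map)
  with set_ys have "distinct (i # ys)" by simp
  then have "distinct (rho i j xs)"
    unfolding rho_conv ys_def [symmetric] by (rule distinct_take_Cons_drop)
  moreover have "set (rho i j xs) = insert i (set ys)"
    unfolding rho_conv ys_def [symmetric] by (rule set_take_Cons_drop)
  moreover have "length (rho i j xs) = length xs + 1" by (simp add: rho_conv)
  ultimately show ?thesis using set_ys i by (auto simp: is_perm_def)
qed

lemma rectangular_bumpD:
  assumes "rectangular \<pi>"
  shows "is_perm \<pi>" and "\<not> has_rect_pattern (map (bump i) \<pi>)"
  using assms has_rect_pattern_map_strict_mono_onD[OF strict_mono_on_bump]
  by (auto simp: rectangular_iff)

lemma rectangular_psi1:
  assumes "rectangular \<pi>"
  shows "rectangular (psi1 \<pi>)"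
proof -
  note perm = rectangular_bumpD(1)[OF assms(1)] and no_pat = rectangular_bumpD(2)[OF assms(1)]
  have "psi1 \<pi> = 1 # map (bump 1) \<pi>" by (simp add: psi1_def rho_conv)
  moreover have "\<forall>y\<in>set (map (bump 1) \<pi>). 1 < y" using perm by (auto simp: is_perm_def bump_def)
  ultimately have "\<not> has_rect_pattern (psi1 \<pi>)"
    using no_pat has_rect_pattern_Cons_minD by metis
  moreover have "is_perm (psi1 \<pi>)" unfolding psi1_def using perm by (rule is_perm_rho) auto
  ultimately show ?thesis by (simp add: rectangular_iff)
qed

lemma rectangular_psi2:
  assumes "rectangular \<pi>"
  shows "rectangular (psi2 \<pi>)"
proof (cases \<pi>)
  case Nil
  then have "psi2 \<pi> = psi1 \<pi>" by (simp add: psi1_def psi2_def rho_def)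
  with assms rectangular_psi1 show ?thesis by simp
next
  case (Cons u us)
  note perm = rectangular_bumpD(1)[OF assms(1)] and no_pat = rectangular_bumpD(2)[OF assms(1)]
  have "psi2 \<pi> = bump 1 u # 1 # map (bump 1) us" by (simp add: psi2_def rho_conv Cons)
  moreover have "\<forall>y\<in>set (map (bump 1) us). 1 < y"
    using perm Cons by (auto simp: is_perm_def bump_def)
  moreover have "bump 1 u # map (bump 1) us = map (bump 1) \<pi>" by (simp add: Cons)
  ultimately have "\<not> has_rect_pattern (psi2 \<pi>)"
    using no_pat has_rect_pattern_second_minD by metis
  moreover have "is_perm (psi2 \<pi>)" unfolding psi2_def using perm by (rule is_perm_rho) auto
  ultimately show ?thesis by (simp add: rectangular_iff)
qed

lemma rectangular_rho_adjacent_to_hd: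
  assumes "rectangular \<pi>" "\<pi> = u # us" "v = u \<or> v = u + 1"
  shows "rectangular (rho v 1 \<pi>)"
proof -
  note perm = rectangular_bumpD(1)[OF assms(1)] and no_pat = rectangular_bumpD(2)[OF assms(1)]
  have "u \<in> set \<pi>" using assms(2) by simp
  with perm have "1 \<le> u" "u \<le> length \<pi>" by (auto simp: is_perm_def)
  with assms(3) have "1 \<le> v" "v \<le> length \<pi> + 1" by auto
  with perm have perm': "is_perm (rho v 1 \<pi>)" by (rule is_perm_rho)
  have "rho v 1 \<pi> = v # map (bump v) \<pi>" by (simp add: rho_conv)
  moreover have "map (bump v) \<pi> = bump v u # map (bump v) us" by (simp add: assms(2))
  moreover have "v = bump v u + 1 \<or> bump v u = v + 1" using assms(3) by (auto simp: bump_def)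
  moreover have "distinct (rho v 1 \<pi>)" using perm' by (simp add: is_perm_def)
  ultimately have "\<not> has_rect_pattern (rho v 1 \<pi>)"
    using no_pat has_rect_pattern_Cons_adjacentD by metis
  with perm' show ?thesis by (simp add: rectangular_iff)
qed

theorem lemma4p1:
  fixes \<pi> :: "nat list"
  assumes "rectangular \<pi>"
  shows "rectangular (psi1 \<pi>) \<and>
         (length \<pi> \<ge> 1 \<and> hd \<pi> \<noteq> 1 \<longrightarrow> rectangular (psi2 \<pi>)) \<and>
         (length \<pi> \<ge> 1 \<and> hd \<pi> \<noteq> 1 \<longrightarrow> rectangular (psiu \<pi>)) \<and>
         (length \<pi> \<ge> 1 \<longrightarrow> rectangular (psid \<pi>))"
  using assms rectangular_psi1 rectangular_psi2 rectangular_rho_adjacent_to_hd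
  by (cases \<pi>) (auto simp: psiu_def psid_def)

end
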